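(* For every $p\ge2$ and $\alpha\ge0$, the following hold in $\mathbb R^N\setminus\{0\}$: \[ \mathcal L_pd=\frac{(Q-1)|\nabla_{\mathcal L}d|^p}{d},\qquad \nabla_{\mathcal L}|\nabla_{\mathcal L}d|\cdot\nabla_{\mathcal L}d=0,\qquad \operatorname{div}_{\mathcal L}\Big(\frac{|\nabla_{\mathcal L}d|^{\alpha+p-2}\nabla_{\mathcal L}d}{d^{Q-1}}\Big)=0. \]
   Context: Vector fields and operators. On $\mathbb R^N$ take $h\le N$ vector fields $X_i=\sum_{j=1}^N\sigma_{i,j}\partial_{x_j}$ with $\sigma_{i,j},\partial_{x_j}\sigma_{i,j}\in C(\mathbb R^N)$. Let $\sigma=(\sigma_{i,j})$ and $\nabla_{\mathcal L}=(X_1,\dots,X_h)=\sigma\nabla$. Set $\operatorname{div}_{\mathcal L}Z=\operatorname{div}(\sigma^TZ)$ and $\mathcal L_pu=\operatorname{div}_{\mathcal L}(|\nabla_{\mathcal L}u|^{p-2}\nabla_{\mathcal L}u)$. Dilations. There are dilations $\delta_\lambda(x)=(\lambda^{\beta_1}x_1,\dots,\lambda^{\beta_N}x_N)$, $\beta_j>0$, with each $X_i$ homogeneous of degree one: $X_i(f\circ\delta_\lambda)=\lambda(X_if)\circ\delta_\lambda$. Set $Q=\sum_j\beta_j$. The function $d$. $d:\mathbb R^N\to[0,\infty)$ satisfies: (i) $d\in C(\mathbb R^N)\cap C^\infty(\mathbb R^N\setminus\{0\})$; (ii) $d(x)=0$ iff $x=0$; (iii) $d(\delta_\lambda x)=\lambda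 d(x)$; (iv) for every $p\ge2$, $\mathcal L_p(d^{(p-Q)/(p-1)})=0$ in $\mathbb R^N\setminus\{0\}$ if $p\neq Q$, and $\mathcal L_Q(-\ln d)=0$ there if $p=Q$. *)

theory Defs
  imports "HOL-Analysis.Analysis"
begin

text \<open>Points of R^N are vectors of type real^'n (N = CARD('n)); vector fields
  X_1..X_h are indexed by a finite type 'h (h = CARD('h)), with coefficient
  functions sigma i j : R^N -> R, so that X_i = sum_j sigma i j * partial_j.\<close>

definition partial :: "'n::finite \<Rightarrow> (real^'n \<Rightarrow> real) \<Rightarrow> real^'n \<Rightarrow> real" where
  "partial j f x = deriv (\<lambda>t. f (x + t *\<^sub>R axis j 1)) 0"

definition has_partial :: "'n::finite \<Rightarrow> (real^'n \<Rightarrow> real) \<Rightarrow> real \<Rightarrow> real^'n \<Rightarrow> bool" where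
  "has_partial j f D x \<longleftrightarrow> ((\<lambda>t. f (x + t *\<^sub>R axis j 1)) has_real_derivative D) (at 0)"

fun Ck_on :: "nat \<Rightarrow> (real^'n::finite) set \<Rightarrow> (real^'n \<Rightarrow> real) \<Rightarrow> bool" where
  "Ck_on 0 S f = continuous_on S f"
| "Ck_on (Suc k) S f = (continuous_on S f \<and>
      (\<forall>j. \<forall>x\<in>S. has_partial j f (partial j f x) x) \<and> (\<forall>j. Ck_on k S (partial j f)))"

definition smooth_on :: "(real^'n::finite) set \<Rightarrow> (real^'n \<Rightarrow> real) \<Rightarrow> bool" where
  "smooth_on S f \<longleftrightarrow> (\<forall>k. Ck_on k S f)"

definition gradL :: "('h::finite \<Rightarrow> 'n::finite \<Rightarrow> real^'n \<Rightarrow> real) \<Rightarrow> (real^'n \<Rightarrow> real) \<Rightarrow> real^'n \<Rightarrow> real^'h" where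
  "gradL \<sigma> u x = (\<chi> i. \<Sum>j\<in>UNIV. \<sigma> i j x * partial j u x)"

text \<open>div_L Z = div (sigma^T Z) holds classically at x with value v:
  each partial derivative d/dx_j of (sigma^T Z)_j exists at x and their sum is v.\<close>
definition has_divL :: "('h::finite \<Rightarrow> 'n::finite \<Rightarrow> real^'n \<Rightarrow> real) \<Rightarrow> (real^'n \<Rightarrow> real^'h) \<Rightarrow> real^'n \<Rightarrow> real \<Rightarrow> bool" where
  "has_divL \<sigma> Z x v \<longleftrightarrow> (\<exists>D. (\<forall>j. has_partial j (\<lambda>y. \<Sum>i\<in>UNIV. \<sigma> i j y * Z y $ i) (D j) x)
                               \<and> (\<Sum>j\<in>UNIV. D j) = v)"

text \<open>|xi|^q xi (for q \<ge> 0), with the convention that it is 0 at xi = 0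
  (avoids the Isabelle convention 0 powr 0 = 0).\<close>
definition pfield :: "real \<Rightarrow> real^'h::finite \<Rightarrow> real^'h" where
  "pfield q \<xi> = (if \<xi> = 0 then 0 else norm \<xi> powr q) *\<^sub>R \<xi>"

definition Lp_eq :: "('h::finite \<Rightarrow> 'n::finite \<Rightarrow> real^'n \<Rightarrow> real) \<Rightarrow> real \<Rightarrow> (real^'n \<Rightarrow> real) \<Rightarrow> real^'n \<Rightarrow> real \<Rightarrow> bool" where
  "Lp_eq \<sigma> p u x v \<longleftrightarrow> has_divL \<sigma> (\<lambda>y. pfield (p - 2) (gradL \<sigma> u y)) x v"

definition dil :: "('n::finite \<Rightarrow> real) \<Rightarrow> real \<Rightarrow> real^'n \<Rightarrow> real^'n" where
  "dil \<beta> lam x = (\<chi> j. lam powr \<beta> j * x $ j)"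

end

theory Submission
  imports Defs
begin

(*
  For q \<ge> 2 the fundamental solution u = d^((q-Q)/(q-1)) (or u = -ln d if q = Q) is a
  function \<phi>(d) of the gauge, so \<nabla>\<^sub>L u = \<phi>'(d) \<nabla>\<^sub>L d, and in both cases
  |\<phi>'(d)|^(q-2) \<phi>'(d) is a nonzero multiple of d^(1-Q). Thus L\<^sub>q u = 0 says precisely that
  div\<^sub>L (d^(1-Q) |\<nabla>\<^sub>L d|^(q-2) \<nabla>\<^sub>L d) = 0; for q = \<alpha> + p this is the third identity.
  Writing |\<nabla>\<^sub>L d|^(q-2) \<nabla>\<^sub>L d as d^(Q-1) times that divergence-free field, the product
  rule gives L\<^sub>q d = (Q-1) |\<nabla>\<^sub>L d|^q / d. Finally, the product rule for |\<nabla>\<^sub>L d| \<nabla>\<^sub>L d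
  expresses L\<^sub>3 d through L\<^sub>2 d and \<nabla>\<^sub>L |\<nabla>\<^sub>L d| \<cdot> \<nabla>\<^sub>L d; comparing with the formula
  for L\<^sub>3 d makes the latter vanish. Only positivity and differentiability of d off the
  origin and property (iv) are used.
*)

lemma has_partial_imp_partial: "has_partial j f D x \<Longrightarrow> partial j f x = D"
  unfolding has_partial_def partial_def by (rule DERIV_imp_deriv)

lemma has_partial_unique: "has_partial j f A x \<Longrightarrow> has_partial j f B x \<Longrightarrow> A = B"
  unfolding has_partial_def by (rule DERIV_unique)

lemma has_partial_cong:
  assumes "open S" "x \<in> S" "\<And>y. y \<in> S \<Longrightarrow> f y = g y"
  shows "has_partial j f D x \<longleftrightarrow> has_partial j g D x"
  unfolding has_partial_def
proof (rule DERIV_cong_ev)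
  have "open ((\<lambda>t::real. x + t *\<^sub>R axis j 1) -` S)"
    using assms(1) by (intro continuous_open_vimage) (auto intro!: continuous_intros)
  moreover have "0 \<in> (\<lambda>t::real. x + t *\<^sub>R axis j 1) -` S"
    using assms(2) by simp
  ultimately have "\<forall>\<^sub>F t in nhds 0. x + t *\<^sub>R axis j 1 \<in> S"
    by (rule eventually_nhds_in_open[THEN eventually_mono]) simp
  then show "\<forall>\<^sub>F t in nhds 0. f (x + t *\<^sub>R axis j 1) = g (x + t *\<^sub>R axis j 1)"
    by eventually_elim (rule assms(3))
qed simp_all

lemma has_partial_const: "has_partial j (\<lambda>_. c) 0 x"
  by (simp add: has_partial_def)

lemma has_partial_mult:
  assumes "has_partial j f A x" "has_partial j g B x"
  shows "has_partial j (\<lambda>y. f y * g y) (A * g x + f x * B) x"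
  using DERIV_mult[OF assms[unfolded has_partial_def]] unfolding has_partial_def
  by (simp add: mult.commute)

lemma has_partial_comp:
  assumes "has_partial j f A x" "(\<phi> has_real_derivative \<phi>') (at (f x))"
  shows "has_partial j (\<lambda>y. \<phi> (f y)) (\<phi>' * A) x"
proof -
  have "(\<phi> has_real_derivative \<phi>') (at (f (x + 0 *\<^sub>R axis j 1)))"
    using assms(2) by simp
  from DERIV_chain2[OF this assms(1)[unfolded has_partial_def]] show ?thesis
    unfolding has_partial_def .
qed

lemma gradL_comp:
  assumes "\<And>j. has_partial j f (partial j f x) x" "(\<phi> has_real_derivative \<phi>') (at (f x))"
  shows "gradL \<sigma> (\<lambda>y. \<phi> (f y)) x = \<phi>' *\<^sub>R gradL \<sigma> f x"
  using has_partial_imp_partial[OF has_partial_comp[OF assms(1) assms(2)]]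
  by (simp add: gradL_def vec_eq_iff sum_distrib_left mult_ac)

lemma pfield_eq: "pfield r \<xi> = norm \<xi> powr r *\<^sub>R \<xi>"
  by (simp add: pfield_def)

lemma pfield_0 [simp]: "pfield 0 \<xi> = \<xi>"
  by (simp add: pfield_def)

lemma pfield_1 [simp]: "pfield 1 \<xi> = norm \<xi> *\<^sub>R \<xi>"
  by (simp add: pfield_eq)

lemma pfield_scaleR: "pfield r (c *\<^sub>R \<xi>) = (\<bar>c\<bar> powr r * c) *\<^sub>R pfield r \<xi>"
  by (simp add: pfield_eq powr_mult)

lemma pfield_scaleR_powr:
  assumes "0 < t"
  shows "pfield (q - 2) ((c * t powr e) *\<^sub>R \<xi>)
    = (\<bar>c\<bar> powr (q - 2) * c * t powr (e * (q - 1))) *\<^sub>R pfield (q - 2) \<xi>"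
proof -
  have "\<bar>c * t powr e\<bar> powr (q - 2) * (c * t powr e)
      = \<bar>c\<bar> powr (q - 2) * c * (t powr (e * (q - 2)) * t powr e)"
    by (simp add: abs_mult powr_mult powr_powr mult_ac)
  also have "t powr (e * (q - 2)) * t powr e = t powr (e * (q - 1))"
    by (simp add: powr_add[symmetric] algebra_simps)
  finally show ?thesis
    by (simp add: pfield_scaleR)
qed

lemma inner_pfield_self: "\<xi> \<bullet> pfield r \<xi> = norm \<xi> powr (r + 2)"
proof (cases "\<xi> = 0")
  case False
  then have "norm \<xi> powr 2 = \<xi> \<bullet> \<xi>"
    by (simp add: powr_realpow power2_norm_eq_inner)
  then show ?thesis
    by (simp add: pfield_eq powr_add)
qed (simp add: pfield_def)

lemma inner_gradL: "gradL \<sigma> f x \<bullet> z = (\<Sum>j\<in>UNIV. partial j f x * (\<Sum>i\<in>UNIV. \<sigma> i j x * z $ i))"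
proof -
  have "gradL \<sigma> f x \<bullet> z = (\<Sum>i\<in>UNIV. \<Sum>j\<in>UNIV. partial j f x * (\<sigma> i j x * z $ i))"
    by (simp add: inner_vec_def gradL_def sum_distrib_left sum_distrib_right mult_ac)
  also have "\<dots> = (\<Sum>j\<in>UNIV. \<Sum>i\<in>UNIV. partial j f x * (\<sigma> i j x * z $ i))"
    by (rule sum.swap)
  finally show ?thesis
    by (simp add: sum_distrib_left)
qed

lemma has_divL_unique:
  assumes "has_divL \<sigma> Z x v" "has_divL \<sigma> Z x w"
  shows "v = w"
proof -
  obtain D where D: "\<And>j. has_partial j (\<lambda>y. \<Sum>i\<in>UNIV. \<sigma> i j y * Z y $ i) (D j) x"
    and v: "sum D UNIV = v"
    using assms(1) unfolding has_divL_def by blast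
  obtain E where E: "\<And>j. has_partial j (\<lambda>y. \<Sum>i\<in>UNIV. \<sigma> i j y * Z y $ i) (E j) x"
    and w: "sum E UNIV = w"
    using assms(2) unfolding has_divL_def by blast
  have "D = E"
    using has_partial_unique[OF D E] by blast
  then show ?thesis
    using v w by simp
qed

lemma has_divL_cong:
  assumes "open S" "x \<in> S" "\<And>y. y \<in> S \<Longrightarrow> Z y = W y"
  shows "has_divL \<sigma> Z x v \<longleftrightarrow> has_divL \<sigma> W x v"
proof -
  have "has_partial j (\<lambda>y. \<Sum>i\<in>UNIV. \<sigma> i j y * Z y $ i) D x
      \<longleftrightarrow> has_partial j (\<lambda>y. \<Sum>i\<in>UNIV. \<sigma> i j y * W y $ i) D x" for j D
    by (rule has_partial_cong[OF assms(1,2)]) (simp add: assms(3))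
  then show ?thesis
    unfolding has_divL_def by simp
qed

lemma has_divL_scaleR:
  assumes f: "\<And>j. has_partial j f (D j) x" and Z: "has_divL \<sigma> Z x v"
  shows "has_divL \<sigma> (\<lambda>y. f y *\<^sub>R Z y) x (f x * v + gradL \<sigma> f x \<bullet> Z x)"
proof -
  obtain E where E: "\<And>j. has_partial j (\<lambda>y. \<Sum>i\<in>UNIV. \<sigma> i j y * Z y $ i) (E j) x"
    and v: "sum E UNIV = v"
    using Z unfolding has_divL_def by blast
  define F where "F j = D j * (\<Sum>i\<in>UNIV. \<sigma> i j x * Z x $ i) + f x * E j" for j
  have "has_partial j (\<lambda>y. \<Sum>i\<in>UNIV. \<sigma> i j y * (f y *\<^sub>R Z y) $ i) (F j) x" for j
    using has_partial_mult[OF f E] by (simp add: F_def sum_distrib_left mult_ac)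
  moreover have "sum F UNIV = f x * v + gradL \<sigma> f x \<bullet> Z x"
    using has_partial_imp_partial[OF f]
    by (simp add: F_def inner_gradL sum.distrib sum_distrib_left v[symmetric])
  ultimately show ?thesis
    unfolding has_divL_def by blast
qed

lemma has_divL_scaleR_const:
  assumes "has_divL \<sigma> Z x v"
  shows "has_divL \<sigma> (\<lambda>y. c *\<^sub>R Z y) x (c * v)"
proof -
  have "gradL \<sigma> (\<lambda>_. c) x = 0"
    by (simp add: gradL_def has_partial_imp_partial[OF has_partial_const] vec_eq_iff)
  then show ?thesis
    using has_divL_scaleR[where f = "\<lambda>_. c", OF has_partial_const assms] by simp
qed

locale fundamental_gauge =
  fixes \<sigma> :: "'h::finite \<Rightarrow> 'n::finite \<Rightarrow> real^'n \<Rightarrow> real" and d :: "real^'n \<Rightarrow> real" and Q :: real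
  assumes d_pos: "x \<noteq> 0 \<Longrightarrow> 0 < d x"
    and d_has_partial: "x \<noteq> 0 \<Longrightarrow> has_partial j d (partial j d x) x"
    and Lp_eq_powr: "2 \<le> q \<Longrightarrow> q \<noteq> Q \<Longrightarrow> x \<noteq> 0 \<Longrightarrow> Lp_eq \<sigma> q (\<lambda>y. d y powr ((q - Q) / (q - 1))) x 0"
    and Lp_eq_ln: "2 \<le> Q \<Longrightarrow> x \<noteq> 0 \<Longrightarrow> Lp_eq \<sigma> Q (\<lambda>y. - ln (d y)) x 0"
begin

lemma fundamental_solution_flux:
  assumes q: "2 \<le> q"
  obtains s u where "s \<noteq> 0" and "\<And>x. x \<noteq> 0 \<Longrightarrow> Lp_eq \<sigma> q u x 0"
    and "\<And>y. y \<noteq> 0 \<Longrightarrow>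
      pfield (q - 2) (gradL \<sigma> u y) = (s / d y powr (Q - 1)) *\<^sub>R pfield (q - 2) (gradL \<sigma> d y)"
proof (cases "q = Q")
  case True
  show ?thesis
  proof (rule that[of "-1" "\<lambda>y. - ln (d y)"])
    show "Lp_eq \<sigma> q (\<lambda>y. - ln (d y)) x 0" if "x \<noteq> 0" for x
      using Lp_eq_ln q that True by simp
    fix y :: "real^'n"
    assume y: "y \<noteq> 0"
    then have dy: "0 < d y"
      by (rule d_pos)
    have "((\<lambda>t. - ln t) has_real_derivative -1 * d y powr -1) (at (d y))"
      using DERIV_minus[OF DERIV_ln_divide[OF dy]] dy by (simp add: powr_neg_one)
    then have "gradL \<sigma> (\<lambda>y. - ln (d y)) y = (-1 * d y powr -1) *\<^sub>R gradL \<sigma> d y"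
      by (rule gradL_comp[OF d_has_partial[OF y]])
    moreover have "d y powr (-1 * (q - 1)) = 1 / d y powr (Q - 1)"
      using True powr_minus_divide[of "d y" "Q - 1"] by simp
    ultimately show "pfield (q - 2) (gradL \<sigma> (\<lambda>y. - ln (d y)) y)
      = (-1 / d y powr (Q - 1)) *\<^sub>R pfield (q - 2) (gradL \<sigma> d y)"
      using pfield_scaleR_powr[OF dy, of q "-1" "-1"] by simp
  qed simp
next
  case False
  define a where "a = (q - Q) / (q - 1)"
  have "a \<noteq> 0"
    using False q by (simp add: a_def)
  have exponent: "(a - 1) * (q - 1) = - (Q - 1)"
    using q by (simp add: a_def field_simps)
  show ?thesis
  proof (rule that[of "\<bar>a\<bar> powr (q - 2) * a" "\<lambda>y. d y powr a"])
    show "\<bar>a\<bar> powr (q - 2) * a \<noteq> 0"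
      using \<open>a \<noteq> 0\<close> by simp
    show "Lp_eq \<sigma> q (\<lambda>y. d y powr a) x 0" if "x \<noteq> 0" for x
      using Lp_eq_powr q that False by (simp add: a_def)
    fix y :: "real^'n"
    assume y: "y \<noteq> 0"
    then have dy: "0 < d y"
      by (rule d_pos)
    have "gradL \<sigma> (\<lambda>y. d y powr a) y = (a * d y powr (a - 1)) *\<^sub>R gradL \<sigma> d y"
      by (rule gradL_comp[OF d_has_partial[OF y] has_real_derivative_powr[OF dy]])
    moreover have "d y powr ((a - 1) * (q - 1)) = 1 / d y powr (Q - 1)"
      unfolding exponent by (rule powr_minus_divide)
    ultimately show "pfield (q - 2) (gradL \<sigma> (\<lambda>y. d y powr a) y)
      = (\<bar>a\<bar> powr (q - 2) * a / d y powr (Q - 1)) *\<^sub>R pfield (q - 2) (gradL \<sigma> d y)"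
      using pfield_scaleR_powr[OF dy, of q a "a - 1"] by simp
  qed
qed

lemma has_divL_weighted_flux:
  assumes q: "2 \<le> q" and x: "x \<noteq> 0"
  shows "has_divL \<sigma> (\<lambda>y. (1 / d y powr (Q - 1)) *\<^sub>R pfield (q - 2) (gradL \<sigma> d y)) x 0"
    (is "has_divL \<sigma> ?W x 0")
proof (rule fundamental_solution_flux[OF q])
  fix s u
  assume s: "s \<noteq> 0" and u: "\<And>x. x \<noteq> 0 \<Longrightarrow> Lp_eq \<sigma> q u x 0"
    and flux: "\<And>y. y \<noteq> 0 \<Longrightarrow>
      pfield (q - 2) (gradL \<sigma> u y) = (s / d y powr (Q - 1)) *\<^sub>R pfield (q - 2) (gradL \<sigma> d y)"
  have "has_divL \<sigma> (\<lambda>y. s *\<^sub>R ?W y) x 0"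
  proof (rule has_divL_cong[OF open_Compl[OF closed_singleton], THEN iffD1])
    show "has_divL \<sigma> (\<lambda>y. pfield (q - 2) (gradL \<sigma> u y)) x 0"
      using u[OF x] unfolding Lp_eq_def .
  qed (use x flux in simp_all)
  from has_divL_scaleR_const[OF this, of "1 / s"] show ?thesis
    using s by simp
qed

lemma Lp_eq_gauge:
  assumes q: "2 \<le> q" and x: "x \<noteq> 0"
  shows "Lp_eq \<sigma> q d x ((Q - 1) * norm (gradL \<sigma> d x) powr q / d x)"
proof -
  let ?P = "\<lambda>y. pfield (q - 2) (gradL \<sigma> d y)"
  have dx: "0 < d x"
    using x by (rule d_pos)
  note powr_deriv = has_real_derivative_powr[OF dx, of "Q - 1"]
  have "has_divL \<sigma> (\<lambda>y. d y powr (Q - 1) *\<^sub>R ((1 / d y powr (Q - 1)) *\<^sub>R ?P y)) x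
      (d x powr (Q - 1) * 0 + gradL \<sigma> (\<lambda>y. d y powr (Q - 1)) x \<bullet> ((1 / d x powr (Q - 1)) *\<^sub>R ?P x))"
    by (rule has_divL_scaleR[OF has_partial_comp[OF d_has_partial[OF x] powr_deriv]
          has_divL_weighted_flux[OF q x]])
  also have "gradL \<sigma> (\<lambda>y. d y powr (Q - 1)) x = ((Q - 1) * d x powr (Q - 1 - 1)) *\<^sub>R gradL \<sigma> d x"
    by (rule gradL_comp[OF d_has_partial[OF x] powr_deriv])
  also have "d x powr (Q - 1) * 0 + ((Q - 1) * d x powr (Q - 1 - 1)) *\<^sub>R gradL \<sigma> d x \<bullet> ((1 / d x powr (Q - 1)) *\<^sub>R ?P x)
      = (Q - 1) * (d x powr (Q - 1 - 1) / d x powr (Q - 1)) * (gradL \<sigma> d x \<bullet> ?P x)"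
    by simp
  also have "d x powr (Q - 1 - 1) / d x powr (Q - 1) = 1 / d x"
    using powr_diff[of "d x" "Q - 1 - 1" "Q - 1"] powr_neg_one[OF dx] by simp
  finally have "has_divL \<sigma> (\<lambda>y. d y powr (Q - 1) *\<^sub>R ((1 / d y powr (Q - 1)) *\<^sub>R ?P y)) x
      ((Q - 1) * norm (gradL \<sigma> d x) powr q / d x)"
    by (simp add: inner_pfield_self)
  moreover have "has_divL \<sigma> (\<lambda>y. d y powr (Q - 1) *\<^sub>R ((1 / d y powr (Q - 1)) *\<^sub>R ?P y)) x v
      \<longleftrightarrow> has_divL \<sigma> ?P x v" for v
  proof (rule has_divL_cong[OF open_Compl[OF closed_singleton]])
    show "d y powr (Q - 1) *\<^sub>R ((1 / d y powr (Q - 1)) *\<^sub>R ?P y) = ?P y" if "y \<in> - {0}" for y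
      using d_pos[of y] that by simp
  qed (use x in simp)
  ultimately show ?thesis
    unfolding Lp_eq_def by blast
qed

lemma gradL_norm_gradL_orthogonal:
  assumes x: "x \<noteq> 0" and D: "\<And>j. has_partial j (\<lambda>y. norm (gradL \<sigma> d y)) (D j) x"
  shows "gradL \<sigma> (\<lambda>y. norm (gradL \<sigma> d y)) x \<bullet> gradL \<sigma> d x = 0"
proof -
  let ?n = "norm (gradL \<sigma> d x)"
  have flux2: "has_divL \<sigma> (gradL \<sigma> d) x ((Q - 1) * ?n powr 2 / d x)"
    using Lp_eq_gauge[OF _ x, of 2] unfolding Lp_eq_def by simp
  have "has_divL \<sigma> (\<lambda>y. norm (gradL \<sigma> d y) *\<^sub>R gradL \<sigma> d y) x ((Q - 1) * ?n powr 3 / d x)"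
    using Lp_eq_gauge[OF _ x, of 3] unfolding Lp_eq_def by simp
  moreover have "has_divL \<sigma> (\<lambda>y. norm (gradL \<sigma> d y) *\<^sub>R gradL \<sigma> d y) x
      (?n * ((Q - 1) * ?n powr 2 / d x) + gradL \<sigma> (\<lambda>y. norm (gradL \<sigma> d y)) x \<bullet> gradL \<sigma> d x)"
    by (rule has_divL_scaleR[OF D flux2])
  ultimately have "(Q - 1) * ?n powr 3 / d x
      = ?n * ((Q - 1) * ?n powr 2 / d x) + gradL \<sigma> (\<lambda>y. norm (gradL \<sigma> d y)) x \<bullet> gradL \<sigma> d x"
    by (rule has_divL_unique)
  then show ?thesis
    by (simp add: power3_eq_cube power2_eq_square algebra_simps)
qed

end

theorem mainTheorem6:
  fixes \<sigma> :: "'h::finite \<Rightarrow> 'n::finite \<Rightarrow> real^'n \<Rightarrow> real"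
    and \<beta> :: "'n \<Rightarrow> real" and d :: "real^'n \<Rightarrow> real" and Q p \<alpha> :: real
  assumes hN: "CARD('h) \<le> CARD('n)"
    and sigma_cont: "\<forall>i j. continuous_on UNIV (\<sigma> i j)"
    and sigma_pd: "\<forall>i j. \<forall>x. has_partial j (\<sigma> i j) (partial j (\<sigma> i j) x) x"
    and sigma_pd_cont: "\<forall>i j. continuous_on UNIV (partial j (\<sigma> i j))"
    and beta_pos: "\<forall>j. \<beta> j > 0"
    and hom: "\<forall>lam>0. \<forall>f. smooth_on UNIV f \<longrightarrow>
               (\<forall>x. gradL \<sigma> (f \<circ> dil \<beta> lam) x = lam *\<^sub>R gradL \<sigma> f (dil \<beta> lam x))"
    and Q_def: "Q = (\<Sum>j\<in>UNIV. \<beta> j)"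
    and d_nonneg: "\<forall>x. d x \<ge> 0"
    and d_cont: "continuous_on UNIV d"
    and d_smooth: "smooth_on (- {0}) d"
    and d_zero: "\<forall>x. d x = 0 \<longleftrightarrow> x = 0"
    and d_hom: "\<forall>lam>0. \<forall>x. d (dil \<beta> lam x) = lam * d x"
    and d_fund: "\<forall>q\<ge>2. \<forall>x. x \<noteq> 0 \<longrightarrow>
               (q \<noteq> Q \<longrightarrow> Lp_eq \<sigma> q (\<lambda>y. d y powr ((q - Q) / (q - 1))) x 0) \<and>
               (q = Q \<longrightarrow> Lp_eq \<sigma> q (\<lambda>y. - ln (d y)) x 0)"
    and p: "p \<ge> 2" and alpha: "\<alpha> \<ge> 0"
  shows "\<forall>x. x \<noteq> 0 \<longrightarrow>
           Lp_eq \<sigma> p d x ((Q - 1) * norm (gradL \<sigma> d x) powr p / d x)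
         \<and> (\<forall>D. (\<forall>j. has_partial j (\<lambda>y. norm (gradL \<sigma> d y)) (D j) x) \<longrightarrow>
               (\<Sum>i\<in>UNIV. (\<Sum>j\<in>UNIV. \<sigma> i j x * D j) * gradL \<sigma> d x $ i) = 0)
         \<and> has_divL \<sigma> (\<lambda>y. (1 / d y powr (Q - 1)) *\<^sub>R pfield (\<alpha> + p - 2) (gradL \<sigma> d y)) x 0"
proof -
  interpret fundamental_gauge \<sigma> d Q
  proof
    fix x :: "real^'n" and j q
    assume x: "x \<noteq> 0"
    show "0 < d x"
      using d_nonneg d_zero x by (simp add: order_less_le)
    have "Ck_on 1 (- {0}) d"
      using d_smooth unfolding smooth_on_def by blast
    then show "has_partial j d (partial j d x) x"
      using x by simp
    show "Lp_eq \<sigma> q (\<lambda>y. d y powr ((q - Q) / (q - 1))) x 0" if "2 \<le> q" "q \<noteq> Q"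
      using d_fund that x by blast
    show "Lp_eq \<sigma> Q (\<lambda>y. - ln (d y)) x 0" if "2 \<le> Q"
      using d_fund that x by blast
  qed
  show ?thesis
  proof (intro allI impI conjI)
    fix x :: "real^'n" and D :: "'n \<Rightarrow> real"
    assume x: "x \<noteq> 0"
    show "Lp_eq \<sigma> p d x ((Q - 1) * norm (gradL \<sigma> d x) powr p / d x)"
      using p x by (rule Lp_eq_gauge)
    show "has_divL \<sigma> (\<lambda>y. (1 / d y powr (Q - 1)) *\<^sub>R pfield (\<alpha> + p - 2) (gradL \<sigma> d y)) x 0"
      using has_divL_weighted_flux[OF _ x] p alpha by simp
    assume D: "\<forall>j. has_partial j (\<lambda>y. norm (gradL \<sigma> d y)) (D j) x"
    then have "partial j (\<lambda>y. norm (gradL \<sigma> d y)) x = D j" for j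
      by (simp add: has_partial_imp_partial)
    then have "(\<Sum>i\<in>UNIV. (\<Sum>j\<in>UNIV. \<sigma> i j x * D j) * gradL \<sigma> d x $ i)
        = gradL \<sigma> (\<lambda>y. norm (gradL \<sigma> d y)) x \<bullet> gradL \<sigma> d x"
      by (simp add: inner_vec_def gradL_def[of \<sigma> "\<lambda>y. norm (gradL \<sigma> d y)"])
    also have "\<dots> = 0"
      using gradL_norm_gradL_orthogonal[OF x] D by blast
    finally show "(\<Sum>i\<in>UNIV. (\<Sum>j\<in>UNIV. \<sigma> i j x * D j) * gradL \<sigma> d x $ i) = 0" .
  qed
qed

end
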